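(* Let $M$ be a regular indecomposable module which is a source module with center $c$ and radius $r$. Then $\sigma M$ is a source module with center $c$ and radius $r+1$.
   Context: Let $k$ be a field and $n\ge 3$. $T(n)$ is the $n$-regular tree; fix a bipartite orientation $\Omega$ (every vertex a sink or a source), $\sigma\Omega$ the opposite orientation. A module is a finite-dimensional $k$-representation of $(T(n),\Omega)$ or $(T(n),\sigma\Omega)$. The shift functor $\sigma$ is the composition of the Bernstein–Gelfand–Ponomarev reflection functors at all sinks, sending representations of $(T(n),\Omega)$ to representations of $(T(n),\sigma\Omega)$ and vice versa. An indecomposable module $M$ is regular if $\sigma^tM\neq 0$ for all $t\in\mathbb Z$ ($\sigma^t$ for $t<0$ being powers of the left adjoint $\sigma^-$). A path of length $t$ is a sequence $(a_0,\dots,a_t)$ of vertices, consecutive ones neighbours, with $a_{i-1}\neq a_{i+1}$; a path of length $2r$ has center $a_r$, radius $r$. For indecomposable $M$, $T(M)$ is the full subgraph on vertices $a$ with $M_a\neq0$; a diameter path is a path in $T(M)$ of maximal length $d(M)$; all diameter paths share a center, the center of $M$; $r(M)=\lfloor d(M)/2\rfloor$. $M$ is a source module if its diameter paths start and end at sources of the orientation of the quiver of which $M$ is a representation. *)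

theory Defs
  imports Main
begin

text \<open>A path (a_0,...,a_t) is a nonempty list of vertices, consecutive ones adjacent,
  with a_(i-1) different from a_(i+1); its length is t = length p - 1.\<close>

definition is_path :: "('v \<Rightarrow> 'v \<Rightarrow> bool) \<Rightarrow> 'v list \<Rightarrow> bool" where
  "is_path adj p \<longleftrightarrow> p \<noteq> [] \<and>
     (\<forall>i. Suc i < length p \<longrightarrow> adj (p ! i) (p ! Suc i)) \<and>
     (\<forall>i. Suc (Suc i) < length p \<longrightarrow> p ! i \<noteq> p ! Suc (Suc i))"

definition regular_tree :: "('v \<Rightarrow> 'v \<Rightarrow> bool) \<Rightarrow> nat \<Rightarrow> bool" where
  "regular_tree adj n \<longleftrightarrow>
     (\<forall>a b. adj a b \<longrightarrow> adj b a) \<and>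
     (\<forall>a. \<not> adj a a) \<and>
     (\<forall>a. finite {b. adj a b} \<and> card {b. adj a b} = n) \<and>
     (\<forall>a b. adj\<^sup>*\<^sup>* a b) \<and>
     \<not> (\<exists>p. is_path adj p \<and> length p \<ge> 2 \<and> hd p = last p)"

text \<open>A bipartite orientation is encoded by snk :: 'v => bool (snk a = True iff a is a sink);
  adjacent vertices have different type, and the arrows are a -> b for adj a b with snk b.
  The opposite orientation is (\<lambda>v. \<not> snk v).\<close>

definition bipartite_orientation :: "('v \<Rightarrow> 'v \<Rightarrow> bool) \<Rightarrow> ('v \<Rightarrow> bool) \<Rightarrow> bool" where
  "bipartite_orientation adj snk \<longleftrightarrow> (\<forall>a b. adj a b \<longrightarrow> snk a \<noteq> snk b)"

definition arrow :: "('v \<Rightarrow> 'v \<Rightarrow> bool) \<Rightarrow> ('v \<Rightarrow> bool) \<Rightarrow> 'v \<Rightarrow> 'v \<Rightarrow> bool" where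
  "arrow adj snk a b \<longleftrightarrow> adj a b \<and> snk b"

text \<open>k^d is modelled as the functions nat => k vanishing from d on; a linear map k^m -> k^l
  is an l x m matrix, i.e. a function nat => nat => k (entries outside the range are 0).\<close>

definition vecs :: "nat \<Rightarrow> (nat \<Rightarrow> 'k::field) set" where
  "vecs d = {x. \<forall>i\<ge>d. x i = 0}"

definition mv :: "(nat \<Rightarrow> nat \<Rightarrow> 'k::field) \<Rightarrow> nat \<Rightarrow> (nat \<Rightarrow> 'k) \<Rightarrow> (nat \<Rightarrow> 'k)" where
  "mv A m x = (\<lambda>i. \<Sum>j<m. A i j * x j)"

definition subspace_of :: "nat \<Rightarrow> (nat \<Rightarrow> 'k::field) set \<Rightarrow> bool" where
  "subspace_of d U \<longleftrightarrow> U \<subseteq> vecs d \<and> (\<lambda>_. 0) \<in> U \<and>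
     (\<forall>x\<in>U. \<forall>y\<in>U. (\<lambda>i. x i + y i) \<in> U) \<and>
     (\<forall>c. \<forall>x\<in>U. (\<lambda>i. c * x i) \<in> U)"

text \<open>A finite-dimensional representation: M_a = k^(dim a), and for an arrow a -> b the
  linear map M_a -> M_b is the matrix mp b a (target first).\<close>

record ('v, 'k) rep =
  dim :: "'v \<Rightarrow> nat"
  mp  :: "'v \<Rightarrow> 'v \<Rightarrow> nat \<Rightarrow> nat \<Rightarrow> 'k"

definition rep_wf :: "('v \<Rightarrow> 'v \<Rightarrow> bool) \<Rightarrow> ('v \<Rightarrow> bool) \<Rightarrow> ('v, 'k::field) rep \<Rightarrow> bool" where
  "rep_wf adj snk M \<longleftrightarrow> finite {a. dim M a \<noteq> 0} \<and>
     (\<forall>b a i j. (\<not> arrow adj snk a b \<or> dim M b \<le> i \<or> dim M a \<le> j) \<longrightarrow> mp M b a i j = 0)"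

definition zero_rep :: "('v, 'k) rep \<Rightarrow> bool" where
  "zero_rep M \<longleftrightarrow> (\<forall>a. dim M a = 0)"

definition decomposable :: "('v \<Rightarrow> 'v \<Rightarrow> bool) \<Rightarrow> ('v \<Rightarrow> bool) \<Rightarrow> ('v, 'k::field) rep \<Rightarrow> bool" where
  "decomposable adj snk M \<longleftrightarrow> (\<exists>U W.
     (\<forall>a. subspace_of (dim M a) (U a) \<and> subspace_of (dim M a) (W a) \<and>
          U a \<inter> W a = {\<lambda>_. 0} \<and>
          (\<forall>x\<in>vecs (dim M a). \<exists>u\<in>U a. \<exists>w\<in>W a. x = (\<lambda>i. u i + w i))) \<and>
     (\<forall>a b. arrow adj snk a b \<longrightarrow>
          (\<forall>x\<in>U a. mv (mp M b a) (dim M a) x \<in> U b) \<and>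
          (\<forall>x\<in>W a. mv (mp M b a) (dim M a) x \<in> W b)) \<and>
     (\<exists>a. U a \<noteq> {\<lambda>_. 0}) \<and> (\<exists>a. W a \<noteq> {\<lambda>_. 0}))"

definition indecomposable :: "('v \<Rightarrow> 'v \<Rightarrow> bool) \<Rightarrow> ('v \<Rightarrow> bool) \<Rightarrow> ('v, 'k::field) rep \<Rightarrow> bool" where
  "indecomposable adj snk M \<longleftrightarrow> \<not> zero_rep M \<and> \<not> decomposable adj snk M"

text \<open>shift adj snk M N: N (a representation of the opposite orientation) is sigma M,
  the composition of the BGP reflection functors at all sinks. At a source a of snk,
  N_a = M_a; at a sink b, N_b together with the maps N_b -> M_a (a neighbour of b),
  given by the matrices mp N a b, is a kernel of the map (x_a) |-> sum_a M_(b,a) x_a from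
  the direct sum of the M_a to M_b. (The reflection is determined up to isomorphism, and
  every N satisfying this is such a choice.)\<close>

definition shift :: "('v \<Rightarrow> 'v \<Rightarrow> bool) \<Rightarrow> ('v \<Rightarrow> bool) \<Rightarrow> ('v, 'k::field) rep \<Rightarrow> ('v, 'k) rep \<Rightarrow> bool" where
  "shift adj snk M N \<longleftrightarrow> rep_wf adj (\<lambda>v. \<not> snk v) N \<and>
     (\<forall>a. \<not> snk a \<longrightarrow> dim N a = dim M a) \<and>
     (\<forall>b. snk b \<longrightarrow>
        (\<forall>y\<in>vecs (dim N b).
           (\<lambda>i. \<Sum>a\<in>{a. adj a b}. mv (mp M b a) (dim M a) (mv (mp N a b) (dim N b) y) i)
             = (\<lambda>_. 0)) \<and>
        (\<forall>y\<in>vecs (dim N b).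
           (\<forall>a. adj a b \<longrightarrow> mv (mp N a b) (dim N b) y = (\<lambda>_. 0)) \<longrightarrow> y = (\<lambda>_. 0)) \<and>
        (\<forall>x. (\<forall>a. adj a b \<longrightarrow> x a \<in> vecs (dim M a)) \<longrightarrow>
           (\<lambda>i. \<Sum>a\<in>{a. adj a b}. mv (mp M b a) (dim M a) (x a) i) = (\<lambda>_. 0) \<longrightarrow>
           (\<exists>y\<in>vecs (dim N b). \<forall>a. adj a b \<longrightarrow> mv (mp N a b) (dim N b) y = x a)))"

text \<open>unshift adj snk M N: N is sigma^- M, the composition of the reflection functors at all
  sources: at a sink b of snk, N_b = M_b; at a source a, N_a together with the maps
  M_b -> N_a (b neighbour of a), given by mp N a b, is a cokernel of the map
  x |-> (M_(b,a) x)_b from M_a to the direct sum of the M_b.\<close>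

definition unshift :: "('v \<Rightarrow> 'v \<Rightarrow> bool) \<Rightarrow> ('v \<Rightarrow> bool) \<Rightarrow> ('v, 'k::field) rep \<Rightarrow> ('v, 'k) rep \<Rightarrow> bool" where
  "unshift adj snk M N \<longleftrightarrow> rep_wf adj (\<lambda>v. \<not> snk v) N \<and>
     (\<forall>b. snk b \<longrightarrow> dim N b = dim M b) \<and>
     (\<forall>a. \<not> snk a \<longrightarrow>
        (\<forall>x\<in>vecs (dim M a).
           (\<lambda>i. \<Sum>b\<in>{b. adj a b}. mv (mp N a b) (dim M b) (mv (mp M b a) (dim M a) x) i)
             = (\<lambda>_. 0)) \<and>
        (\<forall>z\<in>vecs (dim N a). \<exists>y. (\<forall>b. adj a b \<longrightarrow> y b \<in> vecs (dim M b)) \<and>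
           z = (\<lambda>i. \<Sum>b\<in>{b. adj a b}. mv (mp N a b) (dim M b) (y b) i)) \<and>
        (\<forall>y. (\<forall>b. adj a b \<longrightarrow> y b \<in> vecs (dim M b)) \<longrightarrow>
           (\<lambda>i. \<Sum>b\<in>{b. adj a b}. mv (mp N a b) (dim M b) (y b) i) = (\<lambda>_. 0) \<longrightarrow>
           (\<exists>x\<in>vecs (dim M a). \<forall>b. adj a b \<longrightarrow> y b = mv (mp M b a) (dim M a) x)))"

inductive shifts :: "('v \<Rightarrow> 'v \<Rightarrow> bool) \<Rightarrow> ('v \<Rightarrow> bool) \<Rightarrow> ('v, 'k::field) rep \<Rightarrow> nat \<Rightarrow>
    ('v \<Rightarrow> bool) \<Rightarrow> ('v, 'k) rep \<Rightarrow> bool" for adj snk M where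
  shifts_0: "shifts adj snk M 0 snk M"
| shifts_Suc: "shifts adj snk M t snk' N \<Longrightarrow> shift adj snk' N N' \<Longrightarrow>
    shifts adj snk M (Suc t) (\<lambda>v. \<not> snk' v) N'"

inductive unshifts :: "('v \<Rightarrow> 'v \<Rightarrow> bool) \<Rightarrow> ('v \<Rightarrow> bool) \<Rightarrow> ('v, 'k::field) rep \<Rightarrow> nat \<Rightarrow>
    ('v \<Rightarrow> bool) \<Rightarrow> ('v, 'k) rep \<Rightarrow> bool" for adj snk M where
  unshifts_0: "unshifts adj snk M 0 snk M"
| unshifts_Suc: "unshifts adj snk M t snk' N \<Longrightarrow> unshift adj snk' N N' \<Longrightarrow>
    unshifts adj snk M (Suc t) (\<lambda>v. \<not> snk' v) N'"

definition regular :: "('v \<Rightarrow> 'v \<Rightarrow> bool) \<Rightarrow> ('v \<Rightarrow> bool) \<Rightarrow> ('v, 'k::field) rep \<Rightarrow> bool" where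
  "regular adj snk M \<longleftrightarrow> indecomposable adj snk M \<and>
     (\<forall>t snk' N. shifts adj snk M t snk' N \<longrightarrow> \<not> zero_rep N) \<and>
     (\<forall>t snk' N. unshifts adj snk M t snk' N \<longrightarrow> \<not> zero_rep N)"

definition tpath :: "('v \<Rightarrow> 'v \<Rightarrow> bool) \<Rightarrow> ('v, 'k) rep \<Rightarrow> 'v list \<Rightarrow> bool" where
  "tpath adj M p \<longleftrightarrow> is_path adj p \<and> (\<forall>a\<in>set p. dim M a \<noteq> 0)"

definition diam_path :: "('v \<Rightarrow> 'v \<Rightarrow> bool) \<Rightarrow> ('v, 'k) rep \<Rightarrow> 'v list \<Rightarrow> bool" where
  "diam_path adj M p \<longleftrightarrow> tpath adj M p \<and> (\<forall>q. tpath adj M q \<longrightarrow> length q \<le> length p)"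

definition source_module :: "('v \<Rightarrow> 'v \<Rightarrow> bool) \<Rightarrow> ('v \<Rightarrow> bool) \<Rightarrow> ('v, 'k::field) rep \<Rightarrow>
    'v \<Rightarrow> nat \<Rightarrow> bool" where
  "source_module adj snk M c r \<longleftrightarrow> indecomposable adj snk M \<and>
     (\<exists>p. diam_path adj M p) \<and>
     (\<forall>p. diam_path adj M p \<longrightarrow>
        length p = 2 * r + 1 \<and> p ! r = c \<and> \<not> snk (hd p) \<and> \<not> snk (last p))"

end

theory Submission
  imports Defs
begin

text \<open>
  The support of an indecomposable representation is connected, hence convex in the tree: it contains
  every vertex lying between two of its vertices. The shift \<open>\<sigma>\<close> keeps \<open>M\<close> at the sources, and
  at a sink \<open>b\<close> with \<open>M_b = 0\<close> next to the support of \<open>M\<close> it produces \<open>(\<sigma>M)_b \<noteq> 0\<close>; moreover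
  \<open>\<sigma>M\<close> is again indecomposable, since a decomposition of \<open>\<sigma>M\<close> pulls back to one of \<open>M\<close>.
  Consequently a diameter path of \<open>M\<close>, whose ends are sources, extends by one sink at each end to a
  path in the support of \<open>\<sigma>M\<close>; conversely, removing the two end vertices of a path in the support
  of \<open>\<sigma>M\<close> leaves a path in the support of \<open>M\<close>. So the diameter grows by two, the center stays,
  and the new diameter paths end at sinks of the old orientation, i.e. at sources of the new one.
\<close>

section \<open>Paths in the tree\<close>

lemma is_path_singleton [simp]: "is_path adj [x]"
  by (simp add: is_path_def)

lemma is_path_Cons_Cons:
  "is_path adj (x # y # zs) \<longleftrightarrow>
     adj x y \<and> (case zs of [] \<Rightarrow> True | z # _ \<Rightarrow> x \<noteq> z) \<and> is_path adj (y # zs)"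
proof -
  have split: "(\<forall>i::nat. P i) \<longleftrightarrow> P 0 \<and> (\<forall>i. P (Suc i))" for P
    by (metis not0_implies_Suc)
  show ?thesis
    unfolding is_path_def
    by (subst split, subst (2) split) (cases zs; auto simp: nth_Cons)
qed

lemma is_path_Cons:
  assumes "is_path adj p" "adj x (hd p)" "length p \<ge> 2 \<Longrightarrow> p ! 1 \<noteq> x"
  shows "is_path adj (x # p)"
  using assms by (cases p; cases "tl p") (auto simp: is_path_Cons_Cons)

lemma is_path_snoc:
  assumes "is_path adj p" "adj (last p) y" "length p \<ge> 2 \<Longrightarrow> last (butlast p) \<noteq> y"
  shows "is_path adj (p @ [y])"
  using assms
proof (induction p rule: induct_list012)
  case (3 x z zs)
  then show ?case
    by (cases zs) (auto simp: is_path_Cons_Cons)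
qed (auto simp: is_path_def)

lemma is_path_tl: "is_path adj p \<Longrightarrow> length p \<ge> 2 \<Longrightarrow> is_path adj (tl p)"
  by (cases p) (auto simp: is_path_def)

lemma is_path_butlast:
  assumes "is_path adj p" "length p \<ge> 2"
  shows "is_path adj (butlast p)"
proof -
  have "butlast p \<noteq> []" using assms(2) by (cases p rule: rev_cases) auto
  with assms(1) show ?thesis by (auto simp: is_path_def nth_butlast)
qed

lemma is_path_interior:
  assumes "is_path adj p" "0 < j" "j + 1 < length p"
  shows "adj (p ! (j - 1)) (p ! j)" "adj (p ! j) (p ! (j + 1))" "p ! (j - 1) \<noteq> p ! (j + 1)"
proof -
  obtain i where "j = Suc i" using \<open>0 < j\<close> by (cases j) auto
  with assms show "adj (p ! (j - 1)) (p ! j)" "adj (p ! j) (p ! (j + 1))" "p ! (j - 1) \<noteq> p ! (j + 1)"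
    by (auto simp: is_path_def)
qed

lemma is_path_end_edges:
  assumes "is_path adj q" "length q \<ge> 2"
  shows "adj (hd q) (q ! 1)" "adj (q ! (length q - 2)) (last q)"
proof -
  have "q \<noteq> []" using assms(2) by auto
  have "Suc (length q - 2) < length q" "Suc 0 < length q"
    using assms(2) by simp_all
  then have "adj (q ! 0) (q ! 1)" "adj (q ! (length q - 2)) (q ! Suc (length q - 2))"
    using assms(1) unfolding is_path_def by auto
  moreover have "Suc (length q - 2) = length q - 1"
    using assms(2) by simp
  ultimately show "adj (hd q) (q ! 1)" "adj (q ! (length q - 2)) (last q)"
    using \<open>q \<noteq> []\<close> by (simp_all add: hd_conv_nth last_conv_nth)
qed

inductive reach_within :: "('v \<Rightarrow> 'v \<Rightarrow> bool) \<Rightarrow> ('v \<Rightarrow> bool) \<Rightarrow> 'v \<Rightarrow> 'v \<Rightarrow> bool"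
  for adj P where
  reach_within_refl: "P x \<Longrightarrow> reach_within adj P x x"
| reach_within_step: "reach_within adj P x y \<Longrightarrow> adj y z \<Longrightarrow> P z \<Longrightarrow> reach_within adj P x z"

lemma reach_within_path:
  assumes "reach_within adj P x y"
  shows "\<exists>p. is_path adj p \<and> hd p = x \<and> last p = y \<and> (\<forall>v\<in>set p. P v)"
  using assms
proof (induction rule: reach_within.induct)
  case (reach_within_refl x)
  then show ?case by (intro exI[of _ "[x]"]) auto
next
  case (reach_within_step x y z)
  then obtain p where p: "is_path adj p" "hd p = x" "last p = y" "\<forall>v\<in>set p. P v"
    by blast
  have "p \<noteq> []" using p(1) by (simp add: is_path_def)
  show ?case
  proof (cases "length p \<ge> 2 \<and> last (butlast p) = z")
    case True
    \<comment> \<open>the walk just steps back: drop its last vertex\<close>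
    then have "hd (butlast p) = x" using p(2) by (cases p; cases "tl p") auto
    with True p show ?thesis
      by (intro exI[of _ "butlast p"]) (auto simp: is_path_butlast dest: in_set_butlastD)
  next
    case False
    with p reach_within_step.hyps \<open>p \<noteq> []\<close> show ?thesis
      by (intro exI[of _ "p @ [z]"]) (auto intro: is_path_snoc)
  qed
qed

lemma regular_tree_sym: "regular_tree adj n \<Longrightarrow> adj x y \<Longrightarrow> adj y x"
  by (simp add: regular_tree_def)

lemma regular_tree_finite_in: "regular_tree adj n \<Longrightarrow> finite {a. adj a b}"
  unfolding regular_tree_def by (metis (no_types, lifting) Collect_cong)

lemma tree_reach_within_middle:
  assumes tree: "regular_tree adj n"
    and P: "P a" "P a'" and adj: "adj a b" "adj b a'" and "a \<noteq> a'"
    and reach: "reach_within adj P a a'"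
  shows "P b"
proof (rule ccontr)
  assume "\<not> P b"
  obtain p where p: "is_path adj p" "hd p = a" "last p = a'" "\<forall>v\<in>set p. P v"
    using reach_within_path[OF reach] by blast
  have "length p \<ge> 2"
    using p \<open>a \<noteq> a'\<close> by (cases p; cases "tl p") (auto simp: is_path_def)
  have "is_path adj (p @ [b])"
  proof (rule is_path_snoc[OF p(1)])
    show "adj (last p) b" using p(3) regular_tree_sym[OF tree adj(2)] by simp
    show "last (butlast p) \<noteq> b"
    proof -
      have "butlast p \<noteq> []" using \<open>length p \<ge> 2\<close> by (cases p rule: rev_cases) auto
      then show ?thesis using p(4) \<open>\<not> P b\<close> by (metis in_set_butlastD last_in_set)
    qed
  qed
  then have "is_path adj (b # p @ [b])"
    using \<open>length p \<ge> 2\<close> p \<open>\<not> P b\<close> regular_tree_sym[OF tree adj(1)]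
    by (intro is_path_Cons) (auto simp: nth_append hd_append)
  moreover have "length (b # p @ [b]) \<ge> 2" "hd (b # p @ [b]) = last (b # p @ [b])"
    by simp_all
  ultimately show False
    using tree unfolding regular_tree_def by blast
qed

lemma regular_tree_avoiding_neighbour:
  assumes "regular_tree adj n" "n \<ge> 3"
  obtains b where "adj a b" "b \<noteq> x" "b \<noteq> y"
proof -
  have "\<not> {b. adj a b} \<subseteq> {x, y}"
  proof
    assume "{b. adj a b} \<subseteq> {x, y}"
    then have "card {b. adj a b} \<le> card {x, y}"
      by (rule card_mono[rotated]) simp
    also have "\<dots> \<le> 2"
      by (simp add: card_insert_if)
    finally show False
      using assms by (simp add: regular_tree_def)
  qed
  then show ?thesis
    using that by blast
qed

lemma is_path_extend_both:
  assumes tree: "regular_tree adj n" and "n \<ge> 3" and p: "is_path adj p"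
  obtains b0 b1 where "is_path adj (b0 # p @ [b1])"
proof -
  have "p \<noteq> []" using p by (simp add: is_path_def)
  obtain b0 where b0: "adj (hd p) b0" "b0 \<noteq> p ! 1"
    using regular_tree_avoiding_neighbour[OF tree \<open>n \<ge> 3\<close>] by metis
  obtain b1 where b1: "adj (last p) b1" "b1 \<noteq> b0" "b1 \<noteq> last (butlast p)"
    using regular_tree_avoiding_neighbour[OF tree \<open>n \<ge> 3\<close>] by metis
  have "is_path adj (p @ [b1])"
    using b1 by (intro is_path_snoc[OF p]) auto
  moreover have "(p @ [b1]) ! 1 \<noteq> b0"
  proof (cases "length p \<ge> 2")
    case False
    moreover have "length p \<noteq> 0"
      using \<open>p \<noteq> []\<close> by simp
    ultimately have "length p = 1"
      by linarith
    then show ?thesis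
      using b1(2) by (simp add: nth_append)
  qed (use b0(2) in \<open>simp add: nth_append\<close>)
  ultimately have "is_path adj (b0 # p @ [b1])"
    using regular_tree_sym[OF tree b0(1)] \<open>p \<noteq> []\<close> by (intro is_path_Cons) auto
  then show ?thesis ..
qed

section \<open>Coordinate linear algebra\<close>

lemma mv_zero [simp]: "mv A m (\<lambda>_. 0) = (\<lambda>_. (0::'k::field))"
  by (simp add: mv_def)

lemma mv_add: "mv A m (\<lambda>i. x i + y i) = (\<lambda>i. mv A m x i + mv A m y i)"
  by (simp add: mv_def distrib_left sum.distrib)

lemma mv_diff: "mv A m (\<lambda>i. x i - y i) = (\<lambda>i. mv A m x i - mv A m y i)"
  by (simp add: mv_def right_diff_distrib sum_subtractf)

lemma mv_scale: "mv A m (\<lambda>i. c * x i) = (\<lambda>i. c * mv A m x i)"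
  by (simp add: mv_def sum_distrib_left algebra_simps)

lemma zero_in_vecs [simp]: "(\<lambda>_. 0) \<in> vecs d"
  by (simp add: vecs_def)

lemma vecs_0 [simp]: "vecs 0 = {\<lambda>_. 0}"
  by (auto simp: vecs_def)

lemma vecs_nontrivial:
  assumes "d \<noteq> 0"
  shows "vecs d \<noteq> {\<lambda>_. 0 :: 'k::field}"
proof -
  have "(\<lambda>i. if i = 0 then 1 else 0) \<in> vecs d - {\<lambda>_. 0 :: 'k}"
    using assms by (auto simp: vecs_def fun_eq_iff)
  then show ?thesis by blast
qed

lemma vecs_mono: "d \<le> d' \<Longrightarrow> vecs d \<subseteq> vecs d'"
  by (auto simp: vecs_def)

lemma vecs_add: "x \<in> vecs d \<Longrightarrow> y \<in> vecs d \<Longrightarrow> (\<lambda>i. x i + y i) \<in> vecs d"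
  by (simp add: vecs_def)

lemma vecs_diff: "x \<in> vecs d \<Longrightarrow> y \<in> vecs d \<Longrightarrow> (\<lambda>i. x i - y i) \<in> vecs d"
  by (simp add: vecs_def)

lemma vecs_SucD:
  assumes "x \<in> vecs (Suc d)" "x d = 0"
  shows "x \<in> vecs d"
  unfolding vecs_def
proof (intro CollectI allI impI)
  fix j assume "d \<le> j"
  then consider "j = d" | "Suc d \<le> j" by linarith
  then show "x j = 0" using assms by cases (auto simp: vecs_def)
qed

lemma vecs_Suc_eliminate:
  assumes "x \<in> vecs (Suc d)" "e \<in> vecs (Suc d)" "e d = 1"
  shows "(\<lambda>j. x j - x d * e j) \<in> vecs d"
  using assms by (auto simp: vecs_def Suc_le_eq dest: le_neq_implies_less)

lemma mv_in_vecs: "rep_wf adj snk M \<Longrightarrow> mv (mp M b a) m x \<in> vecs (dim M b)"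
  unfolding rep_wf_def vecs_def mv_def by auto

lemma mv_dim_0 [simp]: "mv A 0 y = (\<lambda>_. 0)"
  by (simp add: mv_def)

lemma subspace_ofD:
  assumes "subspace_of d U"
  shows subspace_of_subset: "U \<subseteq> vecs d"
    and subspace_of_zero: "(\<lambda>_. 0) \<in> U"
    and subspace_of_add: "\<And>x y. x \<in> U \<Longrightarrow> y \<in> U \<Longrightarrow> (\<lambda>i. x i + y i) \<in> U"
    and subspace_of_scale: "\<And>c x. x \<in> U \<Longrightarrow> (\<lambda>i. c * x i) \<in> U"
  using assms unfolding subspace_of_def by auto

lemma subspace_ofI:
  assumes "U \<subseteq> vecs d" "(\<lambda>_. 0) \<in> U"
    "\<And>x y. x \<in> U \<Longrightarrow> y \<in> U \<Longrightarrow> (\<lambda>i. x i + y i) \<in> U"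
    "\<And>c x. x \<in> U \<Longrightarrow> (\<lambda>i. c * x i) \<in> U"
  shows "subspace_of d U"
  using assms unfolding subspace_of_def by auto

lemma subspace_of_diff:
  assumes "subspace_of d U" "x \<in> U" "y \<in> U"
  shows "(\<lambda>i. x i - y i) \<in> U"
  using subspace_of_add[OF assms(1,2) subspace_of_scale[OF assms(1,3), of "-1"]] by simp

lemma subspace_of_vecs: "subspace_of d (vecs d :: (nat \<Rightarrow> 'k::field) set)"
  by (auto simp: subspace_of_def vecs_def)

lemma subspace_of_trivial: "subspace_of d {\<lambda>_. 0 :: 'k::field}"
  by (auto simp: subspace_of_def)

lemma subspace_of_mono: "subspace_of d U \<Longrightarrow> d \<le> d' \<Longrightarrow> subspace_of d' U"
  using vecs_mono by (auto simp: subspace_of_def)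

lemma subspace_of_Int_vecs: "subspace_of d' U \<Longrightarrow> subspace_of d (U \<inter> vecs d)"
  by (auto simp: subspace_of_def vecs_def)

lemma subspace_of_line:
  assumes "e \<in> vecs d"
  shows "subspace_of d {\<lambda>j. t * e j | t. True}"
proof (rule subspace_ofI)
  show "{\<lambda>j. t * e j | t. True} \<subseteq> vecs d"
    using assms by (auto simp: vecs_def)
  show "(\<lambda>_. 0) \<in> {\<lambda>j. t * e j | t. True}"
    by (auto intro!: exI[of _ 0])
  fix x y assume "x \<in> {\<lambda>j. t * e j | t. True}" "y \<in> {\<lambda>j. t * e j | t. True}"
  then obtain s t where "x = (\<lambda>j. s * e j)" "y = (\<lambda>j. t * e j)" by blast
  then show "(\<lambda>i. x i + y i) \<in> {\<lambda>j. t * e j | t. True}"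
    by (auto intro!: exI[of _ "s + t"] simp: algebra_simps)
next
  fix c x assume "x \<in> {\<lambda>j. t * e j | t. True}"
  then obtain t where "x = (\<lambda>j. t * e j)" by blast
  then show "(\<lambda>i. c * x i) \<in> {\<lambda>j. t * e j | t. True}"
    by (auto intro!: exI[of _ "c * t"] simp: algebra_simps)
qed

definition subspace_sum :: "(nat \<Rightarrow> 'k::field) set \<Rightarrow> (nat \<Rightarrow> 'k) set \<Rightarrow> (nat \<Rightarrow> 'k) set" where
  "subspace_sum U W = {\<lambda>i. u i + w i | u w. u \<in> U \<and> w \<in> W}"

lemma subspace_sumI: "u \<in> U \<Longrightarrow> w \<in> W \<Longrightarrow> (\<lambda>i. u i + w i) \<in> subspace_sum U W"
  unfolding subspace_sum_def by blast

lemma subspace_sumE: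
  assumes "x \<in> subspace_sum U W"
  obtains u w where "u \<in> U" "w \<in> W" "x = (\<lambda>i. u i + w i)"
  using assms unfolding subspace_sum_def by blast

lemma subspace_sum_trivial [simp]: "subspace_sum U {\<lambda>_. 0} = U"
  unfolding subspace_sum_def by auto

lemma subspace_of_sum:
  assumes U: "subspace_of d U" and W: "subspace_of d W"
  shows "subspace_of d (subspace_sum U W)"
proof (rule subspace_ofI)
  show "subspace_sum U W \<subseteq> vecs d"
    using subspace_of_subset[OF U] subspace_of_subset[OF W]
    by (auto elim!: subspace_sumE intro: vecs_add)
  show "(\<lambda>_. 0) \<in> subspace_sum U W"
    using subspace_sumI[OF subspace_of_zero[OF U] subspace_of_zero[OF W]] by simp
next
  fix x y assume "x \<in> subspace_sum U W" "y \<in> subspace_sum U W"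
  then obtain u w u' w' where "u \<in> U" "w \<in> W" "x = (\<lambda>i. u i + w i)"
    and "u' \<in> U" "w' \<in> W" "y = (\<lambda>i. u' i + w' i)"
    by (auto elim!: subspace_sumE)
  then show "(\<lambda>i. x i + y i) \<in> subspace_sum U W"
    using subspace_sumI[OF subspace_of_add[OF U] subspace_of_add[OF W]]
    by (simp add: algebra_simps)
next
  fix c x assume "x \<in> subspace_sum U W"
  then obtain u w where "u \<in> U" "w \<in> W" "x = (\<lambda>i. u i + w i)"
    by (auto elim!: subspace_sumE)
  then show "(\<lambda>i. c * x i) \<in> subspace_sum U W"
    using subspace_sumI[OF subspace_of_scale[OF U] subspace_of_scale[OF W]]
    by (simp add: algebra_simps)
qed

definition complementary :: "nat \<Rightarrow> (nat \<Rightarrow> 'k::field) set \<Rightarrow> (nat \<Rightarrow> 'k) set \<Rightarrow> bool" where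
  "complementary d U W \<longleftrightarrow> subspace_of d U \<and> subspace_of d W \<and> U \<inter> W = {\<lambda>_. 0} \<and>
     (\<forall>x\<in>vecs d. \<exists>u\<in>U. \<exists>w\<in>W. x = (\<lambda>i. u i + w i))"

lemma complementary_unique:
  assumes "complementary d U W" "u \<in> U" "u' \<in> U" "w \<in> W" "w' \<in> W"
    and "(\<lambda>i. u i + w i) = (\<lambda>i. u' i + w' i)"
  shows "u = u'"
proof -
  have "(\<lambda>i. u i - u' i) = (\<lambda>i. w' i - w i)"
    using assms(6) by (simp add: fun_eq_iff algebra_simps)
  moreover have "(\<lambda>i. u i - u' i) \<in> U" "(\<lambda>i. w' i - w i) \<in> W"
    using assms(1-5) by (auto simp: complementary_def intro: subspace_of_diff)
  ultimately have "(\<lambda>i. u i - u' i) = (\<lambda>_. 0)"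
    using assms(1) by (auto simp: complementary_def)
  then show ?thesis by (simp add: fun_eq_iff)
qed

lemma complementary_Suc_pivot:
  fixes I :: "(nat \<Rightarrow> 'k::field) set"
  assumes I: "subspace_of (Suc d) I" and C0: "complementary d (I \<inter> vecs d) C0"
    and e: "e \<in> I" "e d = 1"
  shows "complementary (Suc d) I C0"
  unfolding complementary_def
proof (intro conjI ballI)
  have C0_sub: "subspace_of d C0" and C0_vecs: "C0 \<subseteq> vecs d"
    using C0 subspace_of_subset by (auto simp: complementary_def)
  show "subspace_of (Suc d) I" by (rule I)
  show "subspace_of (Suc d) C0" using subspace_of_mono[OF C0_sub] by simp
  show "I \<inter> C0 = {\<lambda>_. 0}"
    using C0 C0_vecs subspace_of_zero[OF I] by (auto simp: complementary_def)
  fix x :: "nat \<Rightarrow> 'k" assume x: "x \<in> vecs (Suc d)"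
  obtain i c where ic: "i \<in> I" "c \<in> C0" "(\<lambda>j. x j - x d * e j) = (\<lambda>j. i j + c j)"
    using C0 vecs_Suc_eliminate[OF x subsetD[OF subspace_of_subset[OF I] e(1)] e(2)]
    unfolding complementary_def by blast
  have "(\<lambda>j. i j + x d * e j) \<in> I"
    using subspace_of_add[OF I ic(1) subspace_of_scale[OF I e(1)]] .
  moreover have "x = (\<lambda>j. (i j + x d * e j) + c j)"
  proof
    fix j
    from fun_cong[OF ic(3), of j] show "x j = i j + x d * e j + c j"
      by (simp add: algebra_simps diff_eq_eq)
  qed
  ultimately show "\<exists>u\<in>I. \<exists>w\<in>C0. x = (\<lambda>j. u j + w j)"
    using ic(2) by (intro bexI[of _ "\<lambda>j. i j + x d * e j"] bexI[of _ c]) auto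
qed

lemma complementary_Suc_axis:
  fixes I :: "(nat \<Rightarrow> 'k::field) set"
  assumes I: "subspace_of (Suc d) I" "I \<subseteq> vecs d" and C0: "complementary d I C0"
    and e: "e \<in> vecs (Suc d)" "e d = 1"
  shows "complementary (Suc d) I (subspace_sum C0 {\<lambda>j. t * e j | t. True})"
  unfolding complementary_def
proof (intro conjI ballI)
  let ?L = "{\<lambda>j. t * e j | t. True}"
  have C0_sub: "subspace_of d C0" and C0_vecs: "C0 \<subseteq> vecs d"
    using C0 subspace_of_subset by (auto simp: complementary_def)
  show "subspace_of (Suc d) I" by (rule I)
  show C: "subspace_of (Suc d) (subspace_sum C0 ?L)"
    using subspace_of_sum[OF subspace_of_mono[OF C0_sub] subspace_of_line[OF e(1)]] by simp
  show "I \<inter> subspace_sum C0 ?L = {\<lambda>_. 0}"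
  proof
    show "I \<inter> subspace_sum C0 ?L \<subseteq> {\<lambda>_. 0}"
    proof
      fix x assume x: "x \<in> I \<inter> subspace_sum C0 ?L"
      then obtain c t where c: "c \<in> C0" "x = (\<lambda>j. c j + t * e j)"
        by (auto elim: subspace_sumE)
      have "x d = 0" "c d = 0"
        using x c(1) C0_vecs I(2) by (auto simp: vecs_def)
      then have "x \<in> I \<inter> C0"
        using x c e(2) by simp
      then show "x \<in> {\<lambda>_. 0}"
        using C0 unfolding complementary_def by blast
    qed
    show "{\<lambda>_. 0} \<subseteq> I \<inter> subspace_sum C0 ?L"
      using subspace_of_zero[OF I(1)] subspace_of_zero[OF C] by simp
  qed
  fix x :: "nat \<Rightarrow> 'k" assume x: "x \<in> vecs (Suc d)"
  obtain i c where ic: "i \<in> I" "c \<in> C0" "(\<lambda>j. x j - x d * e j) = (\<lambda>j. i j + c j)"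
    using C0 vecs_Suc_eliminate[OF x e] unfolding complementary_def by blast
  have "(\<lambda>j. c j + x d * e j) \<in> subspace_sum C0 ?L"
    by (rule subspace_sumI[OF ic(2)]) auto
  moreover have "x = (\<lambda>j. i j + (c j + x d * e j))"
  proof
    fix j
    from fun_cong[OF ic(3), of j] show "x j = i j + (c j + x d * e j)"
      by (simp add: algebra_simps diff_eq_eq)
  qed
  ultimately show "\<exists>u\<in>I. \<exists>w\<in>subspace_sum C0 ?L. x = (\<lambda>j. u j + w j)"
    using ic(1) by (intro bexI[of _ i] bexI[of _ "\<lambda>j. c j + x d * e j"]) auto
qed

lemma subspace_has_complement:
  fixes I :: "(nat \<Rightarrow> 'k::field) set"
  assumes "subspace_of d I"
  shows "\<exists>C. complementary d I C"
  using assms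
proof (induction d arbitrary: I)
  case 0
  then have "I = {\<lambda>_. 0}"
    using subspace_of_subset subspace_of_zero by fastforce
  then show ?case
    by (intro exI[of _ "{\<lambda>_. 0}"]) (auto simp: complementary_def subspace_of_trivial)
next
  case (Suc d)
  obtain C0 where C0: "complementary d (I \<inter> vecs d) C0"
    using Suc.IH[OF subspace_of_Int_vecs[OF Suc.prems]] by blast
  show ?case
  proof (cases "\<exists>v\<in>I. v d \<noteq> 0")
    case True
    then obtain v where v: "v \<in> I" "v d \<noteq> 0" by blast
    have pivot: "(\<lambda>j. inverse (v d) * v j) \<in> I"
      using subspace_of_scale[OF Suc.prems v(1)] .
    show ?thesis
      using complementary_Suc_pivot[OF Suc.prems C0 pivot] v(2) by auto
  next
    case False
    then have "I \<subseteq> vecs d"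
      using subspace_of_subset[OF Suc.prems] vecs_SucD by blast
    with C0 have C0': "complementary d I C0"
      by (simp add: Int_absorb2)
    have axis: "(\<lambda>j. if j = d then 1 else 0 :: 'k) \<in> vecs (Suc d)"
      by (simp add: vecs_def)
    show ?thesis
      using complementary_Suc_axis[OF Suc.prems \<open>I \<subseteq> vecs d\<close> C0' axis] by auto
  qed
qed

section \<open>Supports of indecomposable representations\<close>

definition invariant ::
    "('v \<Rightarrow> 'v \<Rightarrow> bool) \<Rightarrow> ('v \<Rightarrow> bool) \<Rightarrow> ('v, 'k::field) rep \<Rightarrow> ('v \<Rightarrow> (nat \<Rightarrow> 'k) set) \<Rightarrow> bool" where
  "invariant adj snk M U \<longleftrightarrow>
     (\<forall>a b. arrow adj snk a b \<longrightarrow> (\<forall>x\<in>U a. mv (mp M b a) (dim M a) x \<in> U b))"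

lemma decomposable_iff:
  "decomposable adj snk M \<longleftrightarrow> (\<exists>U W. (\<forall>a. complementary (dim M a) (U a) (W a)) \<and>
     invariant adj snk M U \<and> invariant adj snk M W \<and> (\<exists>a. U a \<noteq> {\<lambda>_. 0}) \<and> (\<exists>a. W a \<noteq> {\<lambda>_. 0}))"
  unfolding decomposable_def complementary_def invariant_def
  by (simp add: all_conj_distrib imp_conjR ball_conj_distrib conj_assoc)

lemma invariant_support_part:
  fixes M :: "('v, 'k::field) rep"
  assumes wf: "rep_wf adj snk M"
    and closed: "\<And>u v. adj u v \<Longrightarrow> dim M u \<noteq> 0 \<Longrightarrow> dim M v \<noteq> 0 \<Longrightarrow> u \<in> S \<longleftrightarrow> v \<in> S"
  shows "invariant adj snk M (\<lambda>v. if v \<in> S then vecs (dim M v) else {\<lambda>_. 0})"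
  unfolding invariant_def
proof (intro allI impI ballI)
  fix a b and x :: "nat \<Rightarrow> 'k"
  assume ab: "arrow adj snk a b" and x: "x \<in> (if a \<in> S then vecs (dim M a) else {\<lambda>_. 0})"
  have "b \<in> S \<or> dim M b = 0 \<or> x = (\<lambda>_. 0)"
    using closed[of a b] ab x by (cases "dim M a = 0") (auto simp: arrow_def split: if_splits)
  then show "mv (mp M b a) (dim M a) x \<in> (if b \<in> S then vecs (dim M b) else {\<lambda>_. 0})"
    using mv_in_vecs[OF wf, of b a _ x] by auto
qed

lemma decomposable_if_support_splits:
  fixes M :: "('v, 'k::field) rep"
  assumes wf: "rep_wf adj snk M"
    and closed: "\<And>u v. adj u v \<Longrightarrow> dim M u \<noteq> 0 \<Longrightarrow> dim M v \<noteq> 0 \<Longrightarrow> u \<in> S \<longleftrightarrow> v \<in> S"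
    and "a \<in> S" "dim M a \<noteq> 0" "a' \<notin> S" "dim M a' \<noteq> 0"
  shows "decomposable adj snk M"
proof -
  define U where "U v = (if v \<in> S then vecs (dim M v) else {\<lambda>_. 0 :: 'k})" for v
  define W where "W v = (if v \<in> - S then vecs (dim M v) else {\<lambda>_. 0 :: 'k})" for v
  have "complementary (dim M v) (U v) (W v)" for v
    by (auto simp: U_def W_def complementary_def subspace_of_vecs subspace_of_trivial)
  moreover have "invariant adj snk M U"
    unfolding U_def by (rule invariant_support_part[OF wf closed])
  moreover have "invariant adj snk M W"
    unfolding W_def by (rule invariant_support_part[OF wf]) (use closed in blast)
  moreover have "U a \<noteq> {\<lambda>_. 0}" "W a' \<noteq> {\<lambda>_. 0}"
    using assms(3-6) vecs_nontrivial by (auto simp: U_def W_def)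
  ultimately show ?thesis
    unfolding decomposable_iff by blast
qed

lemma indecomposable_support_connected:
  fixes M :: "('v, 'k::field) rep"
  assumes wf: "rep_wf adj snk M" and ind: "indecomposable adj snk M"
    and sym: "\<And>x y. adj x y \<Longrightarrow> adj y x"
    and "dim M a \<noteq> 0" "dim M a' \<noteq> 0"
  shows "reach_within adj (\<lambda>v. dim M v \<noteq> 0) a a'"
proof (rule ccontr)
  assume "\<not> reach_within adj (\<lambda>v. dim M v \<noteq> 0) a a'"
  let ?S = "{v. reach_within adj (\<lambda>v. dim M v \<noteq> 0) a v}"
  have "u \<in> ?S \<longleftrightarrow> v \<in> ?S" if "adj u v" "dim M u \<noteq> 0" "dim M v \<noteq> 0" for u v
    using that sym reach_within_step[of adj "\<lambda>v. dim M v \<noteq> 0" a] by blast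
  moreover have "a \<in> ?S" "a' \<notin> ?S"
    using assms(4) \<open>\<not> reach_within adj _ a a'\<close> by (auto intro: reach_within_refl)
  ultimately have "decomposable adj snk M"
    using decomposable_if_support_splits[OF wf, of ?S a a'] assms(4,5) by blast
  then show False
    using ind by (simp add: indecomposable_def)
qed

lemma indecomposable_support_convex:
  fixes M :: "('v, 'k::field) rep"
  assumes tree: "regular_tree adj n" and wf: "rep_wf adj snk M" and ind: "indecomposable adj snk M"
    and adj: "adj a b" "adj b a'" "a \<noteq> a'" and supp: "dim M a \<noteq> 0" "dim M a' \<noteq> 0"
  shows "dim M b \<noteq> 0"
  using indecomposable_support_connected[OF wf ind regular_tree_sym[OF tree] supp]
  by (rule tree_reach_within_middle[OF tree supp adj])

section \<open>The shift preserves indecomposability\<close>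

definition incoming :: "('v \<Rightarrow> 'v \<Rightarrow> bool) \<Rightarrow> ('v, 'k::field) rep \<Rightarrow> 'v \<Rightarrow> ('v \<Rightarrow> nat \<Rightarrow> 'k) \<Rightarrow> nat \<Rightarrow> 'k" where
  "incoming adj M b u = (\<lambda>i. \<Sum>a\<in>{a. adj a b}. mv (mp M b a) (dim M a) (u a) i)"

definition incoming_image ::
    "('v \<Rightarrow> 'v \<Rightarrow> bool) \<Rightarrow> ('v, 'k::field) rep \<Rightarrow> ('v \<Rightarrow> (nat \<Rightarrow> 'k) set) \<Rightarrow> 'v \<Rightarrow> (nat \<Rightarrow> 'k) set" where
  "incoming_image adj M V b = {incoming adj M b u | u. \<forall>a. adj a b \<longrightarrow> u a \<in> V a}"

lemma incoming_imageI: "(\<And>a. adj a b \<Longrightarrow> u a \<in> V a) \<Longrightarrow> incoming adj M b u \<in> incoming_image adj M V b"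
  unfolding incoming_image_def by blast

lemma incoming_imageE:
  assumes "x \<in> incoming_image adj M V b"
  obtains u where "x = incoming adj M b u" "\<And>a. adj a b \<Longrightarrow> u a \<in> V a"
  using assms unfolding incoming_image_def by blast

lemma incoming_cong: "(\<And>a. adj a b \<Longrightarrow> u a = u' a) \<Longrightarrow> incoming adj M b u = incoming adj M b u'"
  unfolding incoming_def by (intro ext sum.cong) auto

lemma incoming_add:
  "incoming adj M b (\<lambda>a i. u a i + w a i) = (\<lambda>i. incoming adj M b u i + incoming adj M b w i)"
  unfolding incoming_def by (simp add: mv_add sum.distrib)

lemma incoming_diff:
  "incoming adj M b (\<lambda>a i. u a i - w a i) = (\<lambda>i. incoming adj M b u i - incoming adj M b w i)"
  unfolding incoming_def by (simp add: mv_diff sum_subtractf)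

lemma incoming_scale: "incoming adj M b (\<lambda>a i. c * u a i) = (\<lambda>i. c * incoming adj M b u i)"
  unfolding incoming_def by (simp add: mv_scale sum_distrib_left)

lemma incoming_zero [simp]: "incoming adj M b (\<lambda>a _. 0) = (\<lambda>_. 0)"
  unfolding incoming_def by simp

lemma incoming_in_vecs: "rep_wf adj' snk M \<Longrightarrow> incoming adj M b u \<in> vecs (dim M b)"
  unfolding incoming_def using mv_in_vecs[of adj' snk M b] by (auto simp: vecs_def)

lemma incoming_single:
  assumes "finite {a. adj a b}" "adj a b"
  shows "incoming adj M b (\<lambda>a'. if a' = a then x else (\<lambda>_. 0)) = mv (mp M b a) (dim M a) x"
proof
  fix i
  have "incoming adj M b (\<lambda>a'. if a' = a then x else (\<lambda>_. 0)) i =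
      (\<Sum>a'\<in>{a. adj a b}. if a' = a then mv (mp M b a) (dim M a) x i else 0)"
    unfolding incoming_def by (intro sum.cong) auto
  also have "\<dots> = mv (mp M b a) (dim M a) x i"
    using assms by (simp add: sum.delta)
  finally show "incoming adj M b (\<lambda>a'. if a' = a then x else (\<lambda>_. 0)) i = mv (mp M b a) (dim M a) x i" .
qed

lemma subspace_of_incoming_image:
  assumes wf: "rep_wf adj' snk M" and V: "\<And>a. adj a b \<Longrightarrow> subspace_of (dim M a) (V a)"
  shows "subspace_of (dim M b) (incoming_image adj M V b)"
proof (rule subspace_ofI)
  show "incoming_image adj M V b \<subseteq> vecs (dim M b)"
    using incoming_in_vecs[OF wf] by (auto elim: incoming_imageE)
  show "(\<lambda>_. 0) \<in> incoming_image adj M V b"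
    using incoming_imageI[of adj b "\<lambda>a _. 0" V M] subspace_of_zero[OF V] by simp
next
  fix x y assume "x \<in> incoming_image adj M V b" "y \<in> incoming_image adj M V b"
  then obtain u w where "x = incoming adj M b u" "y = incoming adj M b w"
    and "\<And>a. adj a b \<Longrightarrow> u a \<in> V a" "\<And>a. adj a b \<Longrightarrow> w a \<in> V a"
    by (auto elim!: incoming_imageE)
  then show "(\<lambda>i. x i + y i) \<in> incoming_image adj M V b"
    using incoming_imageI[of adj b "\<lambda>a i. u a i + w a i" V M] subspace_of_add[OF V]
    by (simp add: incoming_add)
next
  fix c x assume "x \<in> incoming_image adj M V b"
  then obtain u where "x = incoming adj M b u" "\<And>a. adj a b \<Longrightarrow> u a \<in> V a"
    by (auto elim!: incoming_imageE)
  then show "(\<lambda>i. c * x i) \<in> incoming_image adj M V b"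
    using incoming_imageI[of adj b "\<lambda>a i. c * u a i" V M] subspace_of_scale[OF V]
    by (simp add: incoming_scale)
qed

lemma shiftD:
  assumes "shift adj snk M N"
  shows shift_rep_wf: "rep_wf adj (\<lambda>v. \<not> snk v) N"
    and shift_dim_source: "\<not> snk a \<Longrightarrow> dim N a = dim M a"
    and shift_incoming_zero:
      "snk b \<Longrightarrow> y \<in> vecs (dim N b) \<Longrightarrow> incoming adj M b (\<lambda>a. mv (mp N a b) (dim N b) y) = (\<lambda>_. 0)"
    and shift_kernel_inj: "snk b \<Longrightarrow> y \<in> vecs (dim N b) \<Longrightarrow>
      (\<And>a. adj a b \<Longrightarrow> mv (mp N a b) (dim N b) y = (\<lambda>_. 0)) \<Longrightarrow> y = (\<lambda>_. 0)"
    and shift_kernel_universal: "snk b \<Longrightarrow> (\<And>a. adj a b \<Longrightarrow> x a \<in> vecs (dim M a)) \<Longrightarrow>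
      incoming adj M b x = (\<lambda>_. 0) \<Longrightarrow>
      \<exists>y\<in>vecs (dim N b). \<forall>a. adj a b \<longrightarrow> mv (mp N a b) (dim N b) y = x a"
  using assms unfolding shift_def incoming_def by blast+

lemma shift_dim_sink_nonzero:
  fixes M N :: "('v, 'k::field) rep"
  assumes sh: "shift adj snk M N" and wf: "rep_wf adj snk M"
    and "snk b" "dim M b = 0" "adj a b" "dim M a \<noteq> 0"
  shows "dim N b \<noteq> 0"
proof
  assume "dim N b = 0"
  obtain e :: "nat \<Rightarrow> 'k" where e: "e \<in> vecs (dim M a)" "e \<noteq> (\<lambda>_. 0)"
    using vecs_nontrivial[OF \<open>dim M a \<noteq> 0\<close>] subspace_of_zero[OF subspace_of_vecs] by blast
  let ?x = "\<lambda>a'. if a' = a then e else (\<lambda>_. 0)"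
  have "incoming adj M b ?x = (\<lambda>_. 0)"
    using incoming_in_vecs[OF wf, of adj b ?x] \<open>dim M b = 0\<close> by simp
  then obtain y where "mv (mp N a b) (dim N b) y = e"
    using shift_kernel_universal[OF sh \<open>snk b\<close>, of ?x] e(1) \<open>adj a b\<close> by fastforce
  then show False
    using \<open>dim N b = 0\<close> e(2) by simp
qed

text \<open>A decomposition \<open>U \<oplus> W\<close> of \<open>\<sigma>M\<close> is pulled back to \<open>M\<close>: at a sink \<open>b\<close> take the images of the
  incoming maps, adding to the first summand a complement \<open>C b\<close> of the whole incoming image (the
  second summand is lifted with the trivial complement).\<close>

definition shift_lift :: "('v \<Rightarrow> 'v \<Rightarrow> bool) \<Rightarrow> ('v \<Rightarrow> bool) \<Rightarrow> ('v, 'k::field) rep \<Rightarrow>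
    ('v \<Rightarrow> (nat \<Rightarrow> 'k) set) \<Rightarrow> ('v \<Rightarrow> (nat \<Rightarrow> 'k) set) \<Rightarrow> 'v \<Rightarrow> (nat \<Rightarrow> 'k) set" where
  "shift_lift adj snk M V C v =
     (if snk v then subspace_sum (incoming_image adj M V v) (C v) else V v)"

lemma subspace_of_shift_lift:
  assumes wf: "rep_wf adj snk M" and bip: "bipartite_orientation adj snk"
    and V: "\<And>a. \<not> snk a \<Longrightarrow> subspace_of (dim M a) (V a)"
    and C: "\<And>b. snk b \<Longrightarrow> subspace_of (dim M b) (C b)"
  shows "subspace_of (dim M v) (shift_lift adj snk M V C v)"
proof (cases "snk v")
  case True
  have "subspace_of (dim M a) (V a)" if "adj a v" for a
    using V bip that True by (auto simp: bipartite_orientation_def)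
  then show ?thesis
    using True by (simp add: shift_lift_def subspace_of_sum subspace_of_incoming_image[OF wf] C)
qed (simp add: shift_lift_def V)

lemma invariant_shift_lift:
  assumes bip: "bipartite_orientation adj snk" and fin: "\<And>b. finite {a. adj a b}"
    and V0: "\<And>a. (\<lambda>_. 0) \<in> V a" and C0: "\<And>b. (\<lambda>_. 0) \<in> C b"
  shows "invariant adj snk M (shift_lift adj snk M V C)"
  unfolding invariant_def
proof (intro allI impI ballI)
  fix a b x assume "arrow adj snk a b" "x \<in> shift_lift adj snk M V C a"
  then have "adj a b" "snk b" "\<not> snk a" "x \<in> V a"
    using bip by (auto simp: arrow_def bipartite_orientation_def shift_lift_def)
  let ?u = "\<lambda>a'. if a' = a then x else (\<lambda>_. 0)"
  have "incoming adj M b ?u \<in> incoming_image adj M V b"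
    using \<open>x \<in> V a\<close> V0 by (intro incoming_imageI) auto
  then have "(\<lambda>i. incoming adj M b ?u i + 0) \<in> subspace_sum (incoming_image adj M V b) (C b)"
    by (rule subspace_sumI[OF _ C0])
  moreover have "incoming adj M b ?u = mv (mp M b a) (dim M a) x"
    by (rule incoming_single[where adj = adj, OF fin \<open>adj a b\<close>])
  ultimately have "mv (mp M b a) (dim M a) x \<in> subspace_sum (incoming_image adj M V b) (C b)"
    by simp
  then show "mv (mp M b a) (dim M a) x \<in> shift_lift adj snk M V C b"
    using \<open>snk b\<close> by (simp add: shift_lift_def)
qed

context
  fixes adj :: "'v \<Rightarrow> 'v \<Rightarrow> bool" and snk :: "'v \<Rightarrow> bool" and M N :: "('v, 'k::field) rep"
    and U W C :: "'v \<Rightarrow> (nat \<Rightarrow> 'k) set"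
  assumes bip: "bipartite_orientation adj snk"
    and sym: "\<And>x y. adj x y \<Longrightarrow> adj y x"
    and wf: "rep_wf adj snk M" and sh: "shift adj snk M N"
    and UW: "\<And>a. complementary (dim N a) (U a) (W a)"
    and inv: "invariant adj (\<lambda>v. \<not> snk v) N U" "invariant adj (\<lambda>v. \<not> snk v) N W"
    and C: "\<And>b. complementary (dim M b) (incoming_image adj M (\<lambda>a. vecs (dim M a)) b) (C b)"
begin

lemma neighbour_of_sink: "adj a b \<Longrightarrow> snk b \<Longrightarrow> \<not> snk a \<and> dim N a = dim M a"
  using bip shift_dim_source[OF sh] by (auto simp: bipartite_orientation_def)

lemma subspaces_at_sources:
  "\<not> snk a \<Longrightarrow> subspace_of (dim M a) (U a) \<and> subspace_of (dim M a) (W a)"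
  using UW[of a] shift_dim_source[OF sh, of a] by (simp add: complementary_def)

lemma summands_at_sink_neighbour:
  assumes "adj a v" "snk v"
  shows "U a \<subseteq> vecs (dim M a)" "W a \<subseteq> vecs (dim M a)"
proof -
  have "\<not> snk a"
    using neighbour_of_sink[OF assms] by blast
  then show "U a \<subseteq> vecs (dim M a)" "W a \<subseteq> vecs (dim M a)"
    using subspaces_at_sources subspace_of_subset by blast+
qed

text \<open>A \<open>U\<close>-family and a \<open>W\<close>-family with the same incoming image differ by an element of the kernel
  defining \<open>(\<sigma>M)_v\<close>; splitting its preimage along \<open>U_v \<oplus> W_v\<close> shows that the \<open>U\<close>-family itself
  comes from \<open>(\<sigma>M)_v\<close>, so its image vanishes.\<close>

lemma incoming_images_Int:
  assumes "snk v"
  shows "incoming_image adj M U v \<inter> incoming_image adj M W v \<subseteq> {\<lambda>_. 0}"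
proof
  fix x assume x: "x \<in> incoming_image adj M U v \<inter> incoming_image adj M W v"
  obtain u where "x = incoming adj M v u" and u: "\<And>a. adj a v \<Longrightarrow> u a \<in> U a"
    using x by (blast elim: incoming_imageE)
  moreover obtain w where "x = incoming adj M v w" and w: "\<And>a. adj a v \<Longrightarrow> w a \<in> W a"
    using x by (blast elim: incoming_imageE)
  ultimately have x: "x = incoming adj M v u" "x = incoming adj M v w"
    and uw: "\<And>a. adj a v \<Longrightarrow> u a \<in> U a" "\<And>a. adj a v \<Longrightarrow> w a \<in> W a"
    using u w by blast+
  have "(\<lambda>i. u a i - w a i) \<in> vecs (dim M a)" if "adj a v" for a
    using uw[OF that] summands_at_sink_neighbour[OF that \<open>snk v\<close>] by (blast intro: vecs_diff)
  moreover have "incoming adj M v (\<lambda>a i. u a i - w a i) = (\<lambda>_. 0)"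
    using x by (simp add: incoming_diff fun_eq_iff)
  ultimately obtain y where y: "y \<in> vecs (dim N v)"
    "\<And>a. adj a v \<Longrightarrow> mv (mp N a v) (dim N v) y = (\<lambda>i. u a i - w a i)"
    using shift_kernel_universal[OF sh \<open>snk v\<close>, of "\<lambda>a i. u a i - w a i"] by blast
  obtain yU yW where yUW: "yU \<in> U v" "yW \<in> W v" "y = (\<lambda>i. yU i + yW i)"
    using UW[of v] y(1) unfolding complementary_def by blast
  have "u a = mv (mp N a v) (dim N v) yU" if a: "adj a v" for a
  proof (rule complementary_unique[OF UW[of a]])
    have arrow: "arrow adj (\<lambda>v. \<not> snk v) v a"
      using neighbour_of_sink[OF a \<open>snk v\<close>] sym[OF a] by (simp add: arrow_def)
    show "u a \<in> U a" "mv (mp N a v) (dim N v) yU \<in> U a"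
      using uw(1)[OF a] inv(1) yUW(1) arrow by (auto simp: invariant_def)
    have "subspace_of (dim N a) (W a)"
      using UW[of a] by (simp add: complementary_def)
    from subspace_of_scale[OF this uw(2)[OF a], of "-1"]
    show "(\<lambda>i. - w a i) \<in> W a" by simp
    show "mv (mp N a v) (dim N v) yW \<in> W a"
      using inv(2) yUW(2) arrow by (auto simp: invariant_def)
    show "(\<lambda>i. u a i + - w a i) =
        (\<lambda>i. mv (mp N a v) (dim N v) yU i + mv (mp N a v) (dim N v) yW i)"
      using y(2)[OF a] by (simp add: yUW(3) mv_add)
  qed
  then have "x = incoming adj M v (\<lambda>a. mv (mp N a v) (dim N v) yU)"
    unfolding x(1) by (rule incoming_cong)
  also have "\<dots> = (\<lambda>_. 0)"
  proof (rule shift_incoming_zero[OF sh \<open>snk v\<close>])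
    show "yU \<in> vecs (dim N v)"
      using yUW(1) UW[of v] subspace_of_subset unfolding complementary_def by blast
  qed
  finally show "x \<in> {\<lambda>_. 0}" by simp
qed

lemma shift_lift_Int:
  assumes "snk v"
  shows "shift_lift adj snk M U C v \<inter> shift_lift adj snk M W (\<lambda>_. {\<lambda>_. 0}) v \<subseteq> {\<lambda>_. 0}"
proof
  fix x assume "x \<in> shift_lift adj snk M U C v \<inter> shift_lift adj snk M W (\<lambda>_. {\<lambda>_. 0}) v"
  then have "x \<in> subspace_sum (incoming_image adj M U v) (C v)" and xW: "x \<in> incoming_image adj M W v"
    using \<open>snk v\<close> by (simp_all add: shift_lift_def)
  then obtain s c where sU: "s \<in> incoming_image adj M U v" and c: "c \<in> C v"
    and x: "x = (\<lambda>i. s i + c i)"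
    by (blast elim: subspace_sumE)
  obtain u where s: "s = incoming adj M v u" and u: "\<And>a. adj a v \<Longrightarrow> u a \<in> U a"
    using sU by (blast elim: incoming_imageE)
  obtain w where xw: "x = incoming adj M v w" and w: "\<And>a. adj a v \<Longrightarrow> w a \<in> W a"
    using xW by (blast elim: incoming_imageE)
  have "c = incoming adj M v (\<lambda>a i. w a i - u a i)"
    using x xw s by (simp add: incoming_diff fun_eq_iff algebra_simps)
  then have "c \<in> incoming_image adj M (\<lambda>a. vecs (dim M a)) v"
    using summands_at_sink_neighbour[OF _ \<open>snk v\<close>] u w by (blast intro: incoming_imageI vecs_diff)
  then have "c = (\<lambda>_. 0)"
    using C[of v] c unfolding complementary_def by blast
  then have "x \<in> incoming_image adj M U v \<inter> incoming_image adj M W v"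
    using x sU xW by simp
  then show "x \<in> {\<lambda>_. 0}"
    using incoming_images_Int[OF \<open>snk v\<close>] by blast
qed

lemma shift_lift_sum:
  assumes "snk v" "x \<in> vecs (dim M v)"
  shows "\<exists>u\<in>shift_lift adj snk M U C v. \<exists>w\<in>shift_lift adj snk M W (\<lambda>_. {\<lambda>_. 0}) v.
    x = (\<lambda>i. u i + w i)"
proof -
  obtain i c where i: "i \<in> incoming_image adj M (\<lambda>a. vecs (dim M a)) v" and c: "c \<in> C v"
    and x: "x = (\<lambda>j. i j + c j)"
    using C[of v] assms(2) unfolding complementary_def by blast
  obtain z where "i = incoming adj M v z" and z: "\<And>a. adj a v \<Longrightarrow> z a \<in> vecs (dim M a)"
    using i by (blast elim: incoming_imageE)
  with x have x: "x = (\<lambda>i. incoming adj M v z i + c i)" by simp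
  have "\<exists>p\<in>U a. \<exists>q\<in>W a. z a = (\<lambda>i. p i + q i)" if "adj a v" for a
    using UW[of a] z[OF that] neighbour_of_sink[OF that \<open>snk v\<close>] unfolding complementary_def by auto
  then obtain p q where pq: "\<And>a. adj a v \<Longrightarrow> p a \<in> U a \<and> q a \<in> W a \<and> z a = (\<lambda>i. p a i + q a i)"
    by metis
  have "incoming adj M v z = incoming adj M v (\<lambda>a i. p a i + q a i)"
    using pq by (intro incoming_cong) blast
  then have "x = (\<lambda>i. (incoming adj M v p i + c i) + incoming adj M v q i)"
    using x by (simp add: incoming_add fun_eq_iff algebra_simps)
  moreover have "(\<lambda>i. incoming adj M v p i + c i) \<in> shift_lift adj snk M U C v"
    using \<open>snk v\<close> pq c by (auto simp: shift_lift_def intro!: subspace_sumI incoming_imageI)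
  moreover have "incoming adj M v q \<in> shift_lift adj snk M W (\<lambda>_. {\<lambda>_. 0}) v"
    using \<open>snk v\<close> pq by (auto simp: shift_lift_def intro!: incoming_imageI)
  ultimately show ?thesis
    by (intro bexI[of _ "\<lambda>i. incoming adj M v p i + c i"] bexI[of _ "incoming adj M v q"]) auto
qed

lemma complementary_shift_lift:
  "complementary (dim M v) (shift_lift adj snk M U C v) (shift_lift adj snk M W (\<lambda>_. {\<lambda>_. 0}) v)"
proof (cases "snk v")
  case True
  have "subspace_of (dim M v) (shift_lift adj snk M U C v)"
    "subspace_of (dim M v) (shift_lift adj snk M W (\<lambda>_. {\<lambda>_. 0}) v)"
    using subspaces_at_sources C by (auto intro!: subspace_of_shift_lift[OF wf bip]
        simp: complementary_def subspace_of_trivial)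
  then show ?thesis
    using shift_lift_Int[OF True] shift_lift_sum[OF True] subspace_of_zero
    unfolding complementary_def by blast
next
  case False
  then show ?thesis
    using UW[of v] shift_dim_source[OF sh False] by (simp add: shift_lift_def)
qed

end

lemma shift_invariant_nonzero_at_source:
  fixes M N :: "('v, 'k::field) rep"
  assumes sh: "shift adj snk M N" and bip: "bipartite_orientation adj snk"
    and sym: "\<And>x y. adj x y \<Longrightarrow> adj y x"
    and V: "\<And>a. subspace_of (dim N a) (V a)" and inv: "invariant adj (\<lambda>v. \<not> snk v) N V"
    and "V a \<noteq> {\<lambda>_. 0}"
  shows "\<exists>a. \<not> snk a \<and> V a \<noteq> {\<lambda>_. 0}"
proof (cases "snk a")
  case True
  \<comment> \<open>at a sink, \<open>\<sigma>M\<close> embeds into the sum of its neighbours\<close>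
  obtain y where y: "y \<in> V a" "y \<noteq> (\<lambda>_. 0)"
    using \<open>V a \<noteq> {\<lambda>_. 0}\<close> subspace_of_zero[OF V] by blast
  then obtain a' where a': "adj a' a" "mv (mp N a' a) (dim N a) y \<noteq> (\<lambda>_. 0)"
    using shift_kernel_inj[OF sh True] V subspace_of_subset by blast
  have "\<not> snk a'"
    using bip a'(1) True by (auto simp: bipartite_orientation_def)
  moreover have "mv (mp N a' a) (dim N a) y \<in> V a'"
    using inv y(1) sym[OF a'(1)] \<open>\<not> snk a'\<close> by (auto simp: invariant_def arrow_def)
  ultimately show ?thesis
    using a'(2) by blast
qed (use assms in blast)

lemma shift_indecomposable:
  fixes M N :: "('v, 'k::field) rep"
  assumes bip: "bipartite_orientation adj snk" and sym: "\<And>x y. adj x y \<Longrightarrow> adj y x"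
    and fin: "\<And>b. finite {a. adj a b}"
    and wf: "rep_wf adj snk M" and sh: "shift adj snk M N" and ind: "indecomposable adj snk M"
    and "\<not> zero_rep N"
  shows "indecomposable adj (\<lambda>v. \<not> snk v) N"
  unfolding indecomposable_def
proof
  show "\<not> zero_rep N" by fact
  show "\<not> decomposable adj (\<lambda>v. \<not> snk v) N"
  proof
    assume "decomposable adj (\<lambda>v. \<not> snk v) N"
    then obtain U W a1 a2 where UW: "\<And>a. complementary (dim N a) (U a) (W a)"
      and inv: "invariant adj (\<lambda>v. \<not> snk v) N U" "invariant adj (\<lambda>v. \<not> snk v) N W"
      and "U a1 \<noteq> {\<lambda>_. 0}" "W a2 \<noteq> {\<lambda>_. 0}"
      unfolding decomposable_iff by blast
    have sub: "\<And>a. subspace_of (dim N a) (U a)" "\<And>a. subspace_of (dim N a) (W a)"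
      using UW by (simp_all add: complementary_def)
    then obtain b1 b2 where b: "\<not> snk b1" "U b1 \<noteq> {\<lambda>_. 0}" "\<not> snk b2" "W b2 \<noteq> {\<lambda>_. 0}"
      using shift_invariant_nonzero_at_source[OF sh bip sym _ inv(1) \<open>U a1 \<noteq> _\<close>]
        shift_invariant_nonzero_at_source[OF sh bip sym _ inv(2) \<open>W a2 \<noteq> _\<close>] by blast
    have "\<exists>C. \<forall>b. complementary (dim M b) (incoming_image adj M (\<lambda>a. vecs (dim M a)) b) (C b)"
      by (rule choice)
        (use subspace_has_complement[OF subspace_of_incoming_image[OF wf subspace_of_vecs]] in blast)
    then obtain C where C: "\<And>b. complementary (dim M b) (incoming_image adj M (\<lambda>a. vecs (dim M a)) b) (C b)"
      by blast
    let ?U = "shift_lift adj snk M U C" and ?W = "shift_lift adj snk M W (\<lambda>_. {\<lambda>_. 0})"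
    have "complementary (dim M v) (?U v) (?W v)" for v
      by (rule complementary_shift_lift[OF bip sym wf sh UW inv C])
    moreover have "invariant adj snk M ?U" "invariant adj snk M ?W"
      using subspace_of_zero[OF sub(1)] subspace_of_zero[OF sub(2)] C
      by (auto intro!: invariant_shift_lift[OF bip fin] simp: complementary_def subspace_of_zero)
    moreover have "?U b1 \<noteq> {\<lambda>_. 0}" "?W b2 \<noteq> {\<lambda>_. 0}"
      using b by (simp_all add: shift_lift_def)
    ultimately have "decomposable adj snk M"
      unfolding decomposable_iff by blast
    then show False
      using ind by (simp add: indecomposable_def)
  qed
qed

section \<open>Diameter paths under the shift\<close>

lemma nth_butlast_tl: "i + 2 < length q \<Longrightarrow> butlast (tl q) ! i = q ! Suc i"
  by (simp add: nth_butlast nth_tl)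

lemma
  assumes "length q \<ge> 3"
  shows hd_butlast_tl: "hd (butlast (tl q)) = q ! 1"
    and last_butlast_tl: "last (butlast (tl q)) = q ! (length q - 2)"
proof -
  obtain m where m: "length q = 3 + m"
    using le_Suc_ex[OF assms] by blast
  then have "butlast (tl q) \<noteq> []" "0 + 2 < length q" "(length q - 3) + 2 < length q"
    by (auto simp flip: length_greater_0_conv)
  then show "hd (butlast (tl q)) = q ! 1" "last (butlast (tl q)) = q ! (length q - 2)"
    using m by (simp_all add: hd_conv_nth last_conv_nth nth_butlast_tl)
qed

lemma in_set_butlast_tl: "v \<in> set (butlast (tl q)) \<longleftrightarrow> (\<exists>j. 0 < j \<and> j + 1 < length q \<and> v = q ! j)"
proof
  assume "v \<in> set (butlast (tl q))"
  then obtain i where "i < length (butlast (tl q))" "v = butlast (tl q) ! i"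
    unfolding in_set_conv_nth by blast
  then show "\<exists>j. 0 < j \<and> j + 1 < length q \<and> v = q ! j"
    by (intro exI[of _ "Suc i"]) (simp add: nth_butlast_tl)
next
  assume "\<exists>j. 0 < j \<and> j + 1 < length q \<and> v = q ! j"
  then obtain j where j: "0 < j" "j + 1 < length q" "v = q ! j"
    by blast
  then have "j - 1 < length (butlast (tl q))" "v = butlast (tl q) ! (j - 1)"
    by (simp_all add: nth_butlast_tl)
  then show "v \<in> set (butlast (tl q))"
    by simp
qed

lemma path_interior_in_support:
  fixes P :: "('v, 'k::field) rep"
  assumes tree: "regular_tree adj n" and bip: "bipartite_orientation adj snk"
    and wf: "rep_wf adj snk' P" and ind: "indecomposable adj snk' P"
    and q: "is_path adj q" and j: "0 < j" "j + 1 < length q"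
    and sources: "\<And>i. i < length q \<Longrightarrow> \<not> snk (q ! i) \<Longrightarrow> dim P (q ! i) \<noteq> 0"
  shows "dim P (q ! j) \<noteq> 0"
proof (cases "snk (q ! j)")
  case True
  note adj = is_path_interior[OF q j]
  have "\<not> snk (q ! (j - 1))" "\<not> snk (q ! (j + 1))"
    using bip adj(1,2) True by (auto simp: bipartite_orientation_def)
  then have "dim P (q ! (j - 1)) \<noteq> 0" "dim P (q ! (j + 1)) \<noteq> 0"
    using sources j by auto
  then show ?thesis
    using indecomposable_support_convex[OF tree wf ind adj] by blast
qed (use sources j in auto)

context
  fixes adj :: "'v \<Rightarrow> 'v \<Rightarrow> bool" and n :: nat and snk :: "'v \<Rightarrow> bool"
    and M N :: "('v, 'k::field) rep" and c :: 'v and r :: nat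
  assumes n3: "n \<ge> 3" and tree: "regular_tree adj n" and bip: "bipartite_orientation adj snk"
    and wf: "rep_wf adj snk M" and sm: "source_module adj snk M c r" and sh: "shift adj snk M N"
begin

lemma diam_path_source_module:
  assumes "diam_path adj M p"
  shows "length p = 2 * r + 1" "p ! r = c" "\<not> snk (hd p)" "\<not> snk (last p)"
  using sm assms unfolding source_module_def by blast+

lemma tpath_length_le: "tpath adj M q \<Longrightarrow> length q \<le> 2 * r + 1"
  using sm unfolding source_module_def diam_path_def by fastforce

lemma adj_snk_iff: "adj a b \<Longrightarrow> snk a \<longleftrightarrow> \<not> snk b"
  using bip by (auto simp: bipartite_orientation_def)

lemma diam_path_extension_ends:
  assumes p: "diam_path adj M p" and q: "is_path adj (b0 # p @ [b1])"
  shows "snk b0" "dim M b0 = 0" "dim N b0 \<noteq> 0" "snk b1" "dim M b1 = 0" "dim N b1 \<noteq> 0"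
proof -
  have tp: "is_path adj p" "\<forall>v\<in>set p. dim M v \<noteq> 0" and "p \<noteq> []"
    using p by (auto simp: diam_path_def tpath_def is_path_def)
  have "is_path adj (b0 # p)" "is_path adj (p @ [b1])"
    using is_path_butlast[OF q] is_path_tl[OF q] by (simp_all add: butlast_append)
  then have adj: "adj b0 (hd p)" "adj (last p) b1"
    using is_path_end_edges[of adj "b0 # p"] is_path_end_edges[of adj "p @ [b1]"] \<open>p \<noteq> []\<close>
    by (simp_all add: hd_conv_nth nth_append last_conv_nth Suc_le_eq)
  show "snk b0" "snk b1"
    using adj_snk_iff[OF adj(1)] adj_snk_iff[OF adj(2)] diam_path_source_module[OF p] by simp_all
  \<comment> \<open>otherwise the diameter path could be extended inside the support of \<open>M\<close>\<close>
  show "dim M b0 = 0" "dim M b1 = 0"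
    using tpath_length_le[of "b0 # p"] tpath_length_le[of "p @ [b1]"] diam_path_source_module(1)[OF p]
      \<open>is_path adj (b0 # p)\<close> \<open>is_path adj (p @ [b1])\<close> tp(2)
    by (auto simp: tpath_def)
  show "dim N b0 \<noteq> 0" "dim N b1 \<noteq> 0"
    using shift_dim_sink_nonzero[OF sh wf] \<open>snk b0\<close> \<open>snk b1\<close> \<open>dim M b0 = 0\<close> \<open>dim M b1 = 0\<close>
      regular_tree_sym[OF tree adj(1)] adj(2) tp(2) \<open>p \<noteq> []\<close> by auto
qed

lemma shift_indecomposable_source_module: "indecomposable adj (\<lambda>v. \<not> snk v) N"
proof (rule shift_indecomposable[OF bip regular_tree_sym[OF tree] regular_tree_finite_in[OF tree] wf sh])
  show "indecomposable adj snk M"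
    using sm by (simp add: source_module_def)
  obtain p where p: "diam_path adj M p"
    using sm by (auto simp: source_module_def)
  then obtain b0 b1 where "is_path adj (b0 # p @ [b1])"
    using is_path_extend_both[OF tree n3] by (auto simp: diam_path_def tpath_def)
  then show "\<not> zero_rep N"
    using diam_path_extension_ends(3)[OF p] by (auto simp: zero_rep_def)
qed

lemma shift_tpath_extension:
  assumes p: "diam_path adj M p" and q: "is_path adj (b0 # p @ [b1])"
  shows "tpath adj N (b0 # p @ [b1])"
  unfolding tpath_def
proof (intro conjI ballI q)
  let ?q = "b0 # p @ [b1]"
  have supp_p: "\<And>v. v \<in> set p \<Longrightarrow> dim M v \<noteq> 0"
    using p by (simp add: diam_path_def tpath_def)
  have sources: "dim N (?q ! i) \<noteq> 0" if "i < length ?q" "\<not> snk (?q ! i)" for i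
  proof -
    have "?q ! i \<in> set (b0 # p @ [b1])"
      using that(1) by (rule nth_mem)
    then show ?thesis
      using that(2) diam_path_extension_ends[OF p q] supp_p shift_dim_source[OF sh] by auto
  qed
  fix v assume "v \<in> set ?q"
  then consider "v = b0" | "v = b1" | i where "i < length p" "v = ?q ! Suc i"
    by (auto simp: in_set_conv_nth nth_append)
  then show "dim N v \<noteq> 0"
  proof cases
    case 3
    then show ?thesis
      using path_interior_in_support[OF tree bip shift_rep_wf[OF sh] shift_indecomposable_source_module
          q _ _ sources, of "Suc i"] by simp
  qed (use diam_path_extension_ends[OF p q] in auto)
qed

lemma shift_tpath_core:
  assumes q: "tpath adj N q" and "length q \<ge> 3"
  shows "tpath adj M (butlast (tl q))"
  unfolding tpath_def
proof
  show "is_path adj (butlast (tl q))"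
    using q \<open>length q \<ge> 3\<close> by (auto simp: tpath_def intro!: is_path_butlast is_path_tl)
  have "dim M (q ! i) \<noteq> 0" if "i < length q" "\<not> snk (q ! i)" for i
  proof -
    have "dim N (q ! i) \<noteq> 0"
      using q nth_mem[OF that(1)] by (simp add: tpath_def)
    then show ?thesis
      using shift_dim_source[OF sh that(2)] by simp
  qed
  then show "\<forall>v\<in>set (butlast (tl q)). dim M v \<noteq> 0"
    using path_interior_in_support[OF tree bip wf] sm q
    by (auto simp: in_set_butlast_tl tpath_def source_module_def)
qed

lemma shift_tpath_bound:
  assumes q: "tpath adj N q"
  shows "length q \<le> 2 * r + 3"
    and "length q = 2 * r + 3 \<Longrightarrow> q ! (r + 1) = c \<and> snk (hd q) \<and> snk (last q)"
proof -
  show "length q \<le> 2 * r + 3"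
    using tpath_length_le[OF shift_tpath_core[OF q]] by (cases "length q \<ge> 3") simp_all
next
  assume len: "length q = 2 * r + 3"
  let ?q' = "butlast (tl q)"
  have "diam_path adj M ?q'"
    using shift_tpath_core[OF q] tpath_length_le len by (simp add: diam_path_def)
  note core = diam_path_source_module[OF this]
  have edges: "adj (hd q) (q ! 1)" "adj (q ! (length q - 2)) (last q)"
    using q len is_path_end_edges[of adj q] by (simp_all add: tpath_def)
  show "q ! (r + 1) = c \<and> snk (hd q) \<and> snk (last q)"
    using core len nth_butlast_tl[of r q] hd_butlast_tl[of q] last_butlast_tl[of q]
      adj_snk_iff[OF edges(1)] adj_snk_iff[OF edges(2)] by simp
qed

lemma shift_source_module: "source_module adj (\<lambda>v. \<not> snk v) N c (r + 1)"
  unfolding source_module_def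
proof (intro conjI allI impI)
  show "indecomposable adj (\<lambda>v. \<not> snk v) N"
    by (rule shift_indecomposable_source_module)
  obtain p where p: "diam_path adj M p"
    using sm by (auto simp: source_module_def)
  then obtain b0 b1 where "is_path adj (b0 # p @ [b1])"
    using is_path_extend_both[OF tree n3] by (auto simp: diam_path_def tpath_def)
  then have q0: "tpath adj N (b0 # p @ [b1])" "length (b0 # p @ [b1]) = 2 * r + 3"
    using shift_tpath_extension[OF p] diam_path_source_module(1)[OF p] by simp_all
  have "diam_path adj N (b0 # p @ [b1])"
    unfolding diam_path_def
  proof (intro conjI allI impI q0(1))
    fix q assume "tpath adj N q"
    then show "length q \<le> length (b0 # p @ [b1])"
      using shift_tpath_bound(1)[OF \<open>tpath adj N q\<close>] q0(2) by linarith
  qed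
  then show "\<exists>p. diam_path adj N p" ..
  fix q assume "diam_path adj N q"
  then have "tpath adj N q" "length q = 2 * r + 3"
    using q0 shift_tpath_bound(1)[of q] by (auto simp: diam_path_def intro: le_antisym)
  then show "length q = 2 * (r + 1) + 1" "q ! (r + 1) = c" "\<not> \<not> snk (hd q)" "\<not> \<not> snk (last q)"
    using shift_tpath_bound(2) by simp_all
qed

end

theorem mainTheorem9:
  fixes adj :: "'v \<Rightarrow> 'v \<Rightarrow> bool" and n :: nat and snk :: "'v \<Rightarrow> bool"
    and M N :: "('v, 'k::field) rep" and c :: 'v and r :: nat
  assumes "n \<ge> 3"
    and "regular_tree adj n"
    and "bipartite_orientation adj snk"
    and "rep_wf adj snk M"
    and "regular adj snk M"
    and "source_module adj snk M c r"
    and "shift adj snk M N"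
  shows "source_module adj (\<lambda>v. \<not> snk v) N c (r + 1)"
  using assms(1-4,6,7) by (rule shift_source_module)

end
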